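(* Let $\Omega$ be any norm on $\mathbb{R}^k$ with dual norm $\Omega_*$, let $-1=x_1<\cdots<x_n=1$ be real numbers, and let $U_X=\{-1,1\}\times\{x_1,\ldots,x_n\}$. Suppose $\alpha_1,\ldots,\alpha_n\in\mathbb{R}^k$ satisfy $$\Omega_*\Big(\sum_{i=1}^n\alpha_i\phi_u(x_i)\Big)\le 1\quad\forall u\in U_X.$$ Then $\Omega_*\big(\sum_{i=1}^n\alpha_i\phi_u(x_i)\big)\le 1$ for all $u\in\mathbb{U}$; i.e., $\alpha_1,\ldots,\alpha_n$ are feasible for the dual problem $$\sup_{\alpha_1,\ldots,\alpha_n\in\mathbb{R}^k}\ -\sum_{i=1}^n\sigma_{S_i}(\alpha_i)\quad\text{subject to}\quad \Omega_*\Big(\sum_{i=1}^n\alpha_i\phi_u(x_i)\Big)\le 1\ \ \forall u\in\mathbb{U}$$ (for any non-empty closed convex sets $S_1,\ldots,S_n\subseteq\mathbb{R}^k$).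
   Context: Let $\mathbb{U}=\{-1,1\}\times[-1,1]$. For $u=(s,c)\in\mathbb{U}$ and $x\in\mathbb{R}$ let $\phi_u(x)=(s(x-c))_+$, where $(t)_+=\max(t,0)$. $\Omega_*(z)=\sup_{\Omega(v)\le1}\langle v,z\rangle$ is the dual norm. For a convex set $S$, $\sigma_S(y)=\sup_{w\in S}w^Ty$ is its support function. *)

theory Defs
  imports "HOL-Analysis.Analysis"
begin

definition is_norm :: "('a::real_vector \<Rightarrow> real) \<Rightarrow> bool" where
  "is_norm \<Omega> \<longleftrightarrow>
     (\<forall>x. 0 \<le> \<Omega> x) \<and> (\<forall>x. \<Omega> x = 0 \<longleftrightarrow> x = 0) \<and>
     (\<forall>c x. \<Omega> (c *\<^sub>R x) = \<bar>c\<bar> * \<Omega> x) \<and>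
     (\<forall>x y. \<Omega> (x + y) \<le> \<Omega> x + \<Omega> y)"

definition dual_norm :: "('a::real_inner \<Rightarrow> real) \<Rightarrow> 'a \<Rightarrow> real" where
  "dual_norm \<Omega> z = Sup {inner v z | v. \<Omega> v \<le> 1}"

definition phi :: "real \<times> real \<Rightarrow> real \<Rightarrow> real" where
  "phi u x = max (fst u * (x - snd u)) 0"

definition UU :: "(real \<times> real) set" where
  "UU = {-1, 1} \<times> {-1..1}"

end

theory Submission
  imports Defs
begin

text \<open>On each cell between consecutive grid points no grid point lies strictly inside, so
  every ramp \<open>\<phi>\<^sub>u(x\<^sub>i)\<close> is affine in the breakpoint \<open>c\<close> of \<open>u = (s, c)\<close> along the cell. Hence the
  dual certificate \<open>\<Sum>\<^sub>i \<alpha>\<^sub>i \<phi>\<^sub>u(x\<^sub>i)\<close> at an arbitrary breakpoint is a convex combination of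
  the certificates at the two neighbouring grid points, and it stays in the convex unit ball
  of \<open>\<Omega>\<^sub>*\<close>. Convexity of that ball needs the dual norm to be a genuine supremum, which holds
  because in finite dimension every norm dominates a multiple of the Euclidean one.\<close>

lemma is_norm_zero: "is_norm \<Omega> \<Longrightarrow> \<Omega> 0 = 0"
  unfolding is_norm_def by blast

lemma is_norm_sum_le:
  assumes "is_norm \<Omega>"
  shows "\<Omega> (sum f S) \<le> (\<Sum>i\<in>S. \<Omega> (f i))"
proof (induction S rule: infinite_finite_induct)
  case (insert a F)
  have "\<Omega> (sum f (insert a F)) \<le> \<Omega> (f a) + \<Omega> (sum f F)"
    using insert.hyps assms unfolding is_norm_def by simp
  with insert show ?case by simp
qed (use is_norm_zero[OF assms] in simp_all)

lemma is_norm_le_norm: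
  fixes \<Omega> :: "'a::euclidean_space \<Rightarrow> real"
  assumes N: "is_norm \<Omega>"
  shows "\<Omega> v \<le> (\<Sum>b\<in>Basis. \<Omega> b) * norm v"
proof -
  have "\<Omega> v = \<Omega> (\<Sum>b\<in>Basis. (v \<bullet> b) *\<^sub>R b)"
    by (simp add: euclidean_representation)
  also have "\<dots> \<le> (\<Sum>b\<in>Basis. \<Omega> ((v \<bullet> b) *\<^sub>R b))"
    by (rule is_norm_sum_le[OF N])
  also have "\<dots> = (\<Sum>b\<in>Basis. \<bar>v \<bullet> b\<bar> * \<Omega> b)"
    using N unfolding is_norm_def by simp
  also have "\<dots> \<le> (\<Sum>b\<in>Basis. norm v * \<Omega> b)"
    using N Basis_le_norm unfolding is_norm_def by (intro sum_mono mult_right_mono) auto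
  finally show ?thesis
    by (simp add: sum_distrib_left mult.commute)
qed

lemma is_norm_continuous:
  fixes \<Omega> :: "'a::euclidean_space \<Rightarrow> real"
  assumes N: "is_norm \<Omega>"
  shows "continuous_on UNIV \<Omega>"
proof (rule lipschitz_on_continuous_on)
  let ?M = "\<Sum>b\<in>Basis. \<Omega> b"
  have le: "\<Omega> a \<le> \<Omega> b + ?M * dist a b" for a b
  proof -
    have "\<Omega> a \<le> \<Omega> b + \<Omega> (a - b)"
      using N unfolding is_norm_def by (metis add.commute diff_add_cancel)
    then show ?thesis
      using is_norm_le_norm[OF N, of "a - b"] by (simp add: dist_norm)
  qed
  have "0 \<le> ?M"
    using N unfolding is_norm_def by (simp add: sum_nonneg)
  moreover have "dist (\<Omega> a) (\<Omega> b) \<le> ?M * dist a b" for a b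
    using le[of a b] le[of b a] by (simp add: dist_real_def dist_commute abs_le_iff)
  ultimately show "?M-lipschitz_on UNIV \<Omega>"
    by (intro lipschitz_onI)
qed

lemma is_norm_dominates_norm:
  fixes \<Omega> :: "'a::euclidean_space \<Rightarrow> real"
  assumes N: "is_norm \<Omega>"
  obtains C where "\<And>v. norm v \<le> C * \<Omega> v"
proof -
  have "sphere (0::'a) 1 \<noteq> {}"
    using nonempty_Basis norm_Basis by (metis ex_in_conv mem_sphere_0)
  then obtain v\<^sub>0 where v\<^sub>0: "v\<^sub>0 \<in> sphere 0 1" and min: "\<And>y. y \<in> sphere 0 1 \<Longrightarrow> \<Omega> v\<^sub>0 \<le> \<Omega> y"
    using continuous_attains_inf[OF compact_sphere _ continuous_on_subset[OF is_norm_continuous[OF N]]]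
    by blast
  have pos: "0 < \<Omega> v\<^sub>0"
    using N v\<^sub>0 unfolding is_norm_def by (metis less_eq_real_def mem_sphere_0 norm_zero zero_neq_one)
  have "norm v \<le> (1 / \<Omega> v\<^sub>0) * \<Omega> v" for v
  proof (cases "v = 0")
    case False
    then have "\<Omega> v\<^sub>0 \<le> \<Omega> ((1 / norm v) *\<^sub>R v)"
      by (intro min) simp
    also have "\<dots> = \<Omega> v / norm v"
      using N unfolding is_norm_def by simp
    finally show ?thesis
      using False pos by (simp add: field_simps)
  qed (simp add: is_norm_zero[OF N])
  then show ?thesis by (rule that)
qed

lemma dual_norm_le_one_iff:
  fixes \<Omega> :: "'a::euclidean_space \<Rightarrow> real"
  assumes N: "is_norm \<Omega>"
  shows "dual_norm \<Omega> z \<le> 1 \<longleftrightarrow> (\<forall>v. \<Omega> v \<le> 1 \<longrightarrow> v \<bullet> z \<le> 1)"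
proof -
  obtain C where C: "\<And>v. norm v \<le> C * \<Omega> v"
    using is_norm_dominates_norm[OF N] by blast
  have "v \<bullet> z \<le> \<bar>C\<bar> * norm z" if "\<Omega> v \<le> 1" for v
  proof -
    have "0 \<le> \<Omega> v"
      using N unfolding is_norm_def by blast
    then have "norm v \<le> \<bar>C\<bar> * \<Omega> v"
      using C[of v] by (meson abs_ge_self mult_right_mono order_trans)
    also have "\<dots> \<le> \<bar>C\<bar>"
      using that by (simp add: mult_left_le)
    finally have "norm v \<le> \<bar>C\<bar>" .
    then show ?thesis
      by (meson norm_cauchy_schwarz mult_right_mono norm_ge_zero order_trans)
  qed
  then have "bdd_above {v \<bullet> z | v. \<Omega> v \<le> 1}"
    by (intro bdd_aboveI[where M = "\<bar>C\<bar> * norm z"]) blast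
  moreover have "{v \<bullet> z | v. \<Omega> v \<le> 1} \<noteq> {}"
    using is_norm_zero[OF N] by (metis (mono_tags, lifting) empty_iff mem_Collect_eq zero_le_one)
  ultimately show ?thesis
    unfolding dual_norm_def by (simp add: cSup_le_iff) blast
qed

lemma convex_dual_norm_unit_ball:
  fixes \<Omega> :: "'a::euclidean_space \<Rightarrow> real"
  assumes "is_norm \<Omega>"
  shows "convex {z. dual_norm \<Omega> z \<le> 1}"
proof -
  have "{z. dual_norm \<Omega> z \<le> 1} = (\<Inter>v\<in>{v. \<Omega> v \<le> 1}. {z. v \<bullet> z \<le> 1})"
    using dual_norm_le_one_iff[OF assms] by blast
  then show ?thesis
    by (simp add: convex_INT convex_halfspace_le)
qed

lemma phi_convex_combination_center:
  assumes "0 \<le> u" "0 \<le> v" "u + v = 1"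
    and "(y \<le> a \<and> y \<le> b) \<or> (a \<le> y \<and> b \<le> y)"
  shows "phi (s, u * a + v * b) y = u * phi (s, a) y + v * phi (s, b) y"
proof -
  define p q where "p = s * (y - a)" and "q = s * (y - b)"
  have lin: "s * (y - (u * a + v * b)) = u * p + v * q"
    unfolding p_def q_def using assms(3) by algebra
  have phi_eqs: "phi (s, u * a + v * b) y = max (u * p + v * q) 0"
    "phi (s, a) y = max p 0" "phi (s, b) y = max q 0"
    unfolding phi_def fst_conv snd_conv lin p_def q_def by simp_all
  consider "0 \<le> p" "0 \<le> q" | "p \<le> 0" "q \<le> 0"
    using assms(4) unfolding p_def q_def by (cases "0 \<le> s") (auto simp: zero_le_mult_iff mult_le_0_iff)
  then show ?thesis
  proof cases
    case 1
    then have "0 \<le> u * p" "0 \<le> v * q"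
      using assms(1,2) by simp_all
    with 1 show ?thesis by (simp add: phi_eqs)
  next
    case 2
    then have "u * p \<le> 0" "v * q \<le> 0"
      using assms(1,2) by (simp_all add: mult_nonneg_nonpos)
    with 2 show ?thesis by (simp add: phi_eqs)
  qed
qed

lemma sum_phi_convex_combination_center:
  fixes \<alpha> :: "'i \<Rightarrow> 'a::real_vector"
  assumes "0 \<le> u" "0 \<le> v" "u + v = 1"
    and "\<And>i. i \<in> I \<Longrightarrow> (x i \<le> a \<and> x i \<le> b) \<or> (a \<le> x i \<and> b \<le> x i)"
  shows "(\<Sum>i\<in>I. phi (s, u * a + v * b) (x i) *\<^sub>R \<alpha> i)
    = u *\<^sub>R (\<Sum>i\<in>I. phi (s, a) (x i) *\<^sub>R \<alpha> i) + v *\<^sub>R (\<Sum>i\<in>I. phi (s, b) (x i) *\<^sub>R \<alpha> i)"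
  unfolding scaleR_sum_right sum.distrib[symmetric]
  by (rule sum.cong)
    (simp_all add: phi_convex_combination_center[OF assms(1-3) assms(4)] scaleR_add_left)

lemma exists_grid_cell:
  fixes x :: "nat \<Rightarrow> 'a::linorder"
  assumes "1 < n" "x 1 \<le> c" "c \<le> x n"
  shows "\<exists>j. 1 \<le> j \<and> j < n \<and> x j \<le> c \<and> c \<le> x (Suc j)"
  using assms
proof (induction n)
  case (Suc m)
  show ?case
  proof (cases "1 < m \<and> c \<le> x m")
    case True
    then show ?thesis
      using Suc by (meson less_SucI)
  next
    case False
    then have "x m \<le> c"
      using Suc.prems by (cases "m = 1") auto
    then show ?thesis
      using Suc.prems by (intro exI[of _ m]) auto
  qed
qed simp

theorem lemma2:
  fixes \<Omega> :: "real ^ 'k \<Rightarrow> real"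
    and n :: nat
    and x :: "nat \<Rightarrow> real"
    and \<alpha> :: "nat \<Rightarrow> real ^ 'k"
  assumes norm: "is_norm \<Omega>"
    and incr: "\<And>i j. 1 \<le> i \<Longrightarrow> i < j \<Longrightarrow> j \<le> n \<Longrightarrow> x i < x j"
    and first: "x 1 = -1"
    and last: "x n = 1"
    and feas: "\<forall>u \<in> {-1, 1} \<times> x ` {1..n}.
                 dual_norm \<Omega> (\<Sum>i = 1..n. phi u (x i) *\<^sub>R \<alpha> i) \<le> 1"
  shows "\<forall>u \<in> UU. dual_norm \<Omega> (\<Sum>i = 1..n. phi u (x i) *\<^sub>R \<alpha> i) \<le> 1"
proof
  fix u assume "u \<in> UU"
  then obtain s c where u: "u = (s, c)" and s: "s \<in> {-1, 1}" and c: "x 1 \<le> c" "c \<le> x n"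
    using first last unfolding UU_def by auto
  define F where "F w = (\<Sum>i = 1..n. phi (s, w) (x i) *\<^sub>R \<alpha> i)" for w
  let ?B = "{z. dual_norm \<Omega> z \<le> 1}"
  have grid: "F (x i) \<in> ?B" if "i \<in> {1..n}" for i
    using feas s that unfolding F_def by auto
  have "F c \<in> ?B"
  proof (cases "n = 0")
    case True
    then show ?thesis
      unfolding F_def by (simp add: dual_norm_le_one_iff[OF norm])
  next
    case False
    then have "1 < n"
      using first last by (cases "n = 1") auto
    then obtain j where j: "1 \<le> j" "j < n" "x j \<le> c" "c \<le> x (Suc j)"
      using exists_grid_cell c by blast
    then have "c \<in> closed_segment (x j) (x (Suc j))"
      by (simp add: closed_segment_eq_real_ivl)
    then obtain w where w: "0 \<le> w" "w \<le> 1" "c = (1 - w) * x j + w * x (Suc j)"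
      by (auto simp: closed_segment_def)
    have outside: "(x i \<le> x j \<and> x i \<le> x (Suc j)) \<or> (x j \<le> x i \<and> x (Suc j) \<le> x i)"
      if "i \<in> {1..n}" for i
      using incr[of i j] incr[of j "Suc j"] incr[of "Suc j" i] j that
      by (cases "i < j"; cases "i = j"; cases "i = Suc j") auto
    have "F c = (1 - w) *\<^sub>R F (x j) + w *\<^sub>R F (x (Suc j))"
      unfolding F_def w(3) using w outside by (intro sum_phi_convex_combination_center) auto
    then show ?thesis
      using convexD[OF convex_dual_norm_unit_ball[OF norm] grid grid] j w by simp
  qed
  then show "dual_norm \<Omega> (\<Sum>i = 1..n. phi u (x i) *\<^sub>R \<alpha> i) \<le> 1"
    unfolding u F_def by simp
qed

end
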